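(* Let $\varepsilon>0$ and $\delta\in(0,1]$, and let $\pi_{\mathrm{opt}}$ be the optimal partition selection primitive for $(\varepsilon,\delta)$-differential privacy, i.e. the function $\mathbb{N}\to[0,1]$ given by $\pi_{\mathrm{opt}}(0)=0$ and $\pi_{\mathrm{opt}}(n+1)=\min\left(e^{\varepsilon}\pi_{\mathrm{opt}}(n)+\delta,\;1-e^{-\varepsilon}(1-\pi_{\mathrm{opt}}(n)-\delta),\;1\right)$ for $n\ge0$. Then there exist integers $n_1,n_2$ with $0<n_1\le n_2$ such that: $\pi_{\mathrm{opt}}(n)=e^{\varepsilon}\pi_{\mathrm{opt}}(n-1)+\delta$ for $0<n\le n_1$; $\pi_{\mathrm{opt}}(n)=1-e^{-\varepsilon}\left(1-\pi_{\mathrm{opt}}(n-1)-\delta\right)$ for $n_1<n\le n_2$; and $\pi_{\mathrm{opt}}(n)=1$ for $n>n_2$.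
   Context: $\mathbb{N}=\{0,1,2,\dots\}$. (The recurrence given characterizes the maximal function $\pi:\mathbb{N}\to[0,1]$ with $\pi(0)=0$ such that releasing a partition with $n$ users with probability $\pi(n)$ is $(\varepsilon,\delta)$-differentially private with respect to adding or removing one user.) *)

theory Defs
  imports Complex_Main
begin

primrec pi_opt :: "real \<Rightarrow> real \<Rightarrow> nat \<Rightarrow> real" where
  "pi_opt eps delta 0 = 0"
| "pi_opt eps delta (Suc n) =
     min (exp eps * pi_opt eps delta n + delta)
         (min (1 - exp (- eps) * (1 - pi_opt eps delta n - delta)) 1)"

end

theory Submission
  imports Defs
begin

text \<open>
  For \<open>p \<ge> 0\<close> the second argument of the minimum in the recursion exceeds the first by
  \<open>e\<^sup>-\<^sup>\<epsilon>(e\<^sup>\<epsilon> - 1)((1 - \<delta>) - (e\<^sup>\<epsilon> + 1)p)\<close>, so the first argument is active exactly while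
  \<open>p \<le> (1 - \<delta>)/(e\<^sup>\<epsilon> + 1)\<close>, and the cap \<open>1\<close> is active exactly when \<open>p + \<delta> \<ge> 1\<close>.
  The sequence is nondecreasing and grows by at least \<open>e\<^sup>-\<^sup>\<epsilon>\<delta>\<close> per step while \<open>p + \<delta> \<le> 1\<close>,
  so it eventually crosses both thresholds; \<open>n\<^sub>1\<close> and \<open>n\<^sub>2\<close> are the first indices at which
  it does.
\<close>

definition pi_step :: "real \<Rightarrow> real \<Rightarrow> real \<Rightarrow> real" where
  "pi_step eps delta p = min (exp eps * p + delta) (min (1 - exp (- eps) * (1 - p - delta)) 1)"

lemma pi_opt_Suc_eq_pi_step [simp]:
  "pi_opt eps delta (Suc n) = pi_step eps delta (pi_opt eps delta n)"
  by (simp add: pi_step_def)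

declare pi_opt.simps(2) [simp del]

lemma pi_step_eq_one:
  assumes "0 \<le> eps" "0 \<le> p" "1 \<le> p + delta"
  shows "pi_step eps delta p = 1"
proof -
  have "p \<le> exp eps * p"
    using assms(2) mult_right_mono[of 1 "exp eps" p] assms(1) by simp
  moreover have "exp (- eps) * (1 - p - delta) \<le> 0"
    using assms(3) by (simp add: mult_nonneg_nonpos)
  ultimately show ?thesis
    using assms(3) by (simp add: pi_step_def)
qed

lemma pi_step_ge_add:
  assumes "0 \<le> eps" "0 \<le> delta" "0 \<le> p" "p + delta \<le> 1"
  shows "p + exp (- eps) * delta \<le> pi_step eps delta p"
proof -
  have F: "0 < exp (- eps)" "exp (- eps) \<le> 1"
    using assms(1) by simp_all
  have "p \<le> exp eps * p"
    using assms(3) mult_right_mono[of 1 "exp eps" p] assms(1) by simp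
  moreover have "exp (- eps) * delta \<le> delta"
    using F assms(2) mult_right_mono[of "exp (- eps)" 1 delta] by simp
  moreover have "exp (- eps) * (1 - p) \<le> 1 - p"
    using F assms(2,4) mult_right_mono[of "exp (- eps)" 1 "1 - p"] by simp
  ultimately show ?thesis
    using assms(4) by (simp add: pi_step_def algebra_simps)
qed

lemma pi_step_ge:
  assumes "0 \<le> eps" "0 \<le> delta" "0 \<le> p" "p \<le> 1"
  shows "p \<le> pi_step eps delta p"
proof (cases "p + delta \<le> 1")
  case True
  have "0 \<le> exp (- eps) * delta"
    using assms(2) by simp
  then show ?thesis
    using pi_step_ge_add[OF assms(1-3) True] by linarith
next
  case False
  then show ?thesis
    using pi_step_eq_one[OF assms(1,3)] assms(4) by simp
qed

lemma pi_step_branch_difference: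
  fixes eps delta p :: real
  shows "1 - exp (- eps) * (1 - p - delta) - (exp eps * p + delta) =
     exp (- eps) * (exp eps - 1) * ((1 - delta) - (exp eps + 1) * p)"
proof -
  have "1 - F * (1 - p - delta) - (E * p + delta) = F * (E - 1) * ((1 - delta) - (E + 1) * p)"
    if "E * F = 1" for E F :: real
    using that by algebra
  then show ?thesis
    using exp_minus_inverse by blast
qed

lemma pi_step_eq_exp_mult_add:
  assumes "0 \<le> eps" "0 \<le> p" "(exp eps + 1) * p \<le> 1 - delta"
  shows "pi_step eps delta p = exp eps * p + delta"
proof -
  have "0 \<le> exp (- eps) * (exp eps - 1) * ((1 - delta) - (exp eps + 1) * p)"
    using assms(1,3) by simp
  moreover have "exp eps * p \<le> (exp eps + 1) * p"
    using assms(2) by (simp add: algebra_simps)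
  ultimately show ?thesis
    using pi_step_branch_difference[of eps p delta] assms(3) by (simp add: pi_step_def)
qed

lemma pi_step_eq_one_minus:
  assumes "0 \<le> eps" "1 - delta \<le> (exp eps + 1) * p" "p + delta \<le> 1"
  shows "pi_step eps delta p = 1 - exp (- eps) * (1 - p - delta)"
proof -
  have "exp (- eps) * (exp eps - 1) * ((1 - delta) - (exp eps + 1) * p) \<le> 0"
    using assms(1,2) by (simp add: mult_nonneg_nonpos)
  moreover have "0 \<le> exp (- eps) * (1 - p - delta)"
    using assms(3) by simp
  ultimately show ?thesis
    using pi_step_branch_difference[of eps p delta] by (simp add: pi_step_def)
qed

lemma pi_opt_le_one: "pi_opt eps delta n \<le> 1"
  by (cases n) (simp_all add: pi_step_def)

lemma pi_opt_nonneg: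
  assumes "0 \<le> eps" "0 \<le> delta"
  shows "0 \<le> pi_opt eps delta n"
proof (induction n)
  case 0
  show ?case by simp
next
  case (Suc n)
  then show ?case
    using pi_step_ge[OF assms Suc pi_opt_le_one] by simp
qed

lemma incseq_pi_opt:
  assumes "0 \<le> eps" "0 \<le> delta"
  shows "incseq (pi_opt eps delta)"
  by (rule incseq_SucI) (simp add: pi_step_ge assms pi_opt_nonneg pi_opt_le_one)

lemma pi_opt_linear_growth:
  assumes "0 \<le> eps" "0 \<le> delta" "\<forall>k<n. pi_opt eps delta k + delta \<le> 1"
  shows "real n * (exp (- eps) * delta) \<le> pi_opt eps delta n"
  using assms(3)
proof (induction n)
  case 0
  show ?case by simp
next
  case (Suc n)
  have "pi_opt eps delta n + exp (- eps) * delta \<le> pi_opt eps delta (Suc n)"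
    using pi_step_ge_add[OF assms(1,2) pi_opt_nonneg[OF assms(1,2)]] Suc.prems by simp
  then show ?case
    using Suc by (simp add: algebra_simps)
qed

lemma pi_opt_exists_add_gt_one:
  assumes "0 \<le> eps" "0 < delta"
  shows "\<exists>n. 1 < pi_opt eps delta n + delta"
proof (rule ccontr)
  assume "\<not> ?thesis"
  then have "real n * (exp (- eps) * delta) \<le> 1" for n
    using pi_opt_linear_growth[of eps delta n] pi_opt_le_one[of eps delta n] assms
    by (simp add: not_less order_trans)
  moreover obtain n where "1 < real n * (exp (- eps) * delta)"
    using reals_Archimedean3 assms(2) by (metis exp_gt_zero mult_pos_pos)
  ultimately show False
    by (meson not_le)
qed

definition first_phase_end :: "real \<Rightarrow> real \<Rightarrow> nat" where
  "first_phase_end eps delta = (LEAST n. 1 - delta < (exp eps + 1) * pi_opt eps delta n)"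

definition second_phase_end :: "real \<Rightarrow> real \<Rightarrow> nat" where
  "second_phase_end eps delta = (LEAST n. 1 < pi_opt eps delta n + delta)"

lemma second_phase_end_add_gt_one:
  assumes "0 \<le> eps" "0 < delta"
  shows "1 < pi_opt eps delta (second_phase_end eps delta) + delta"
  unfolding second_phase_end_def using pi_opt_exists_add_gt_one[OF assms] by (rule LeastI_ex)

lemma threshold_lt_second_phase_end:
  assumes "0 \<le> eps" "0 < delta"
  shows "1 - delta < (exp eps + 1) * pi_opt eps delta (second_phase_end eps delta)"
proof -
  let ?q = "pi_opt eps delta (second_phase_end eps delta)"
  have "?q \<le> (exp eps + 1) * ?q"
    using pi_opt_nonneg[of eps delta] assms by (simp add: algebra_simps)
  then show ?thesis
    using second_phase_end_add_gt_one[OF assms] by linarith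
qed

lemma threshold_lt_first_phase_end:
  assumes "0 \<le> eps" "0 < delta"
  shows "1 - delta < (exp eps + 1) * pi_opt eps delta (first_phase_end eps delta)"
  unfolding first_phase_end_def using threshold_lt_second_phase_end[OF assms] by (rule LeastI)

lemma first_phase_end_le_second_phase_end:
  assumes "0 \<le> eps" "0 < delta"
  shows "first_phase_end eps delta \<le> second_phase_end eps delta"
  unfolding first_phase_end_def using threshold_lt_second_phase_end[OF assms] by (rule Least_le)

lemma first_phase_end_pos:
  assumes "0 \<le> eps" "0 < delta" "delta \<le> 1"
  shows "0 < first_phase_end eps delta"
  using threshold_lt_first_phase_end[OF assms(1,2)] assms(3) gr0I by fastforce

lemma pi_opt_Suc_first_phase:
  assumes "0 \<le> eps" "0 \<le> delta" "k < first_phase_end eps delta"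
  shows "pi_opt eps delta (Suc k) = exp eps * pi_opt eps delta k + delta"
  using not_less_Least[OF assms(3)[unfolded first_phase_end_def]]
    pi_step_eq_exp_mult_add[OF assms(1) pi_opt_nonneg[OF assms(1,2)]]
  by (simp add: not_less)

lemma pi_opt_Suc_second_phase:
  assumes "0 \<le> eps" "0 < delta"
    and "first_phase_end eps delta \<le> k" "k < second_phase_end eps delta"
  shows "pi_opt eps delta (Suc k) = 1 - exp (- eps) * (1 - pi_opt eps delta k - delta)"
proof -
  have "pi_opt eps delta (first_phase_end eps delta) \<le> pi_opt eps delta k"
    using incseq_pi_opt[of eps delta] assms(1,2,3) by (simp add: monoD)
  then have "(exp eps + 1) * pi_opt eps delta (first_phase_end eps delta)
      \<le> (exp eps + 1) * pi_opt eps delta k"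
    by (simp add: add_pos_pos)
  then have "1 - delta \<le> (exp eps + 1) * pi_opt eps delta k"
    using threshold_lt_first_phase_end[OF assms(1,2)] by linarith
  moreover have "pi_opt eps delta k + delta \<le> 1"
    using not_less_Least[OF assms(4)[unfolded second_phase_end_def]] by simp
  ultimately show ?thesis
    using pi_step_eq_one_minus[OF assms(1)] by simp
qed

lemma pi_opt_Suc_saturated:
  assumes "0 \<le> eps" "0 < delta" "second_phase_end eps delta \<le> k"
  shows "pi_opt eps delta (Suc k) = 1"
proof -
  have "pi_opt eps delta (second_phase_end eps delta) \<le> pi_opt eps delta k"
    using incseq_pi_opt[of eps delta] assms by (simp add: monoD)
  then show ?thesis
    using second_phase_end_add_gt_one[OF assms(1,2)] pi_step_eq_one[OF assms(1)]
      pi_opt_nonneg[of eps delta k] assms(1,2) by simp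
qed

theorem lemma2:
  fixes eps delta :: real
  assumes "eps > 0" and "delta > 0" and "delta \<le> 1"
  shows "\<exists>n1 n2 :: nat. 0 < n1 \<and> n1 \<le> n2 \<and>
    (\<forall>n. 0 < n \<and> n \<le> n1 \<longrightarrow>
       pi_opt eps delta n = exp eps * pi_opt eps delta (n - 1) + delta) \<and>
    (\<forall>n. n1 < n \<and> n \<le> n2 \<longrightarrow>
       pi_opt eps delta n = 1 - exp (- eps) * (1 - pi_opt eps delta (n - 1) - delta)) \<and>
    (\<forall>n. n2 < n \<longrightarrow> pi_opt eps delta n = 1)"
proof (rule exI[of _ "first_phase_end eps delta"], rule exI[of _ "second_phase_end eps delta"],
    intro conjI allI impI)
  have eps: "0 \<le> eps"
    using assms(1) by simp
  show "0 < first_phase_end eps delta"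
    using first_phase_end_pos[OF eps assms(2,3)] .
  show "first_phase_end eps delta \<le> second_phase_end eps delta"
    using first_phase_end_le_second_phase_end[OF eps assms(2)] .
  fix n
  show "pi_opt eps delta n = exp eps * pi_opt eps delta (n - 1) + delta"
    if "0 < n \<and> n \<le> first_phase_end eps delta"
    using that pi_opt_Suc_first_phase[OF eps] assms(2) by (cases n) auto
  show "pi_opt eps delta n = 1 - exp (- eps) * (1 - pi_opt eps delta (n - 1) - delta)"
    if "first_phase_end eps delta < n \<and> n \<le> second_phase_end eps delta"
    using that pi_opt_Suc_second_phase[OF eps assms(2)] by (cases n) auto
  show "pi_opt eps delta n = 1" if "second_phase_end eps delta < n"
    using that pi_opt_Suc_saturated[OF eps assms(2)] by (cases n) auto
qed

end
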